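(* Let $\mathbf{X}$ be a set of discrete random variables with sample space $\Omega(\mathbf{X})$, let $o$ be a decomposable and smooth positive unital circuit (D-PUnC) whose root has scope $\mathbf{X}$, and let $\rho$ be a density matrix of the same size as the root operator. Then $p_{\mathbf{X}}(\mathbf{x})=\operatorname{Tr}[o(\mathbf{x})\rho]$ is a probability distribution on $\Omega(\mathbf{X})$: $p_{\mathbf{X}}(\mathbf{x})\ge 0$ for all $\mathbf{x}$ and $\sum_{\mathbf{x}\in\Omega(\mathbf{X})}p_{\mathbf{X}}(\mathbf{x})=1$.
   Context: A density matrix is a PSD complex matrix of trace one; a POVM is a finite family of PSD matrices summing to the identity. A quantum operation from $d\times d$ to $d'\times d'$ matrices is $\Phi(A)=\sum_jK_jAK_j^*$ with $d'\times d$ matrices $K_j$, $\sum_jK_j^*K_j\le\mathbb{1}$ (Loewner order); it is unital if $\Phi(\mathbb{1}_d)=\mathbb{1}_{d'}$. A positive unital circuit (in this unstructured form) over $\mathbf{X}$ is a rooted directed acyclic computation graph with three kinds of units. A leaf unit $k$ is associated with one variable $X_k$ (finite sample space $\Omega(X_k)$) and a POVM $\{e_{x}\}_{x\in\Omega(X_k)}$, and computes $o_k(x_k)=e_{x_k}$. A product unit $k$ has two inputs $k_l,k_r$ and computes $o_k=o_{k_l}(\mathbf{x}_{k_l})\otimes o_{k_r}(\mathbf{x}_{k_r})$ (Kronecker product). A sum unit $k$ with input set $\mathrm{in}(k)$ computes $o_k=\sum_{j\in\mathrm{in}(k)}w_{kj}\Phi_{kj}(o_j(\mathbf{x}_j))$,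 where the $\Phi_{kj}$ are unital quantum operations into a common matrix size and $w_{kj}>0$ are reals with $\sum_jw_{kj}=1$. The scope $\phi(k)$ of a unit is $\{X_k\}$ for a leaf and the union of the scopes of its inputs otherwise; $\mathbf{x}_k$ is an assignment to $\phi(k)$, and $o(\mathbf{x})$ denotes the root's output. The circuit is decomposable if for every product unit $\phi(k_l)\cap\phi(k_r)=\emptyset$, and smooth if all inputs of every sum unit have the same scope. *)

theory Defs
  imports "Jordan_Normal_Form.Matrix" "HOL-Library.Complex_Order" "HOL-Library.FuncSet"
begin

definition adj :: "complex mat \<Rightarrow> complex mat" where
  "adj A = mat (dim_col A) (dim_row A) (\<lambda>(i,j). cnj (A $$ (j,i)))"

definition mtrace :: "complex mat \<Rightarrow> complex" where
  "mtrace A = (\<Sum>i<dim_row A. A $$ (i,i))"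

definition kron :: "complex mat \<Rightarrow> complex mat \<Rightarrow> complex mat" where
  "kron A B = mat (dim_row A * dim_row B) (dim_col A * dim_col B)
     (\<lambda>(i,j). A $$ (i div dim_row B, j div dim_col B) * B $$ (i mod dim_row B, j mod dim_col B))"

definition psd :: "nat \<Rightarrow> complex mat \<Rightarrow> bool" where
  "psd n A \<longleftrightarrow> A \<in> carrier_mat n n \<and> adj A = A \<and>
     (\<forall>v \<in> carrier_vec n. (0::complex) \<le> (\<Sum>i<n. cnj (v $ i) * (A *\<^sub>v v) $ i))"

definition loewner_le :: "nat \<Rightarrow> complex mat \<Rightarrow> complex mat \<Rightarrow> bool" where
  "loewner_le n A B \<longleftrightarrow> A \<in> carrier_mat n n \<and> B \<in> carrier_mat n n \<and> psd n (B - A)"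

definition density :: "nat \<Rightarrow> complex mat \<Rightarrow> bool" where
  "density n \<rho> \<longleftrightarrow> psd n \<rho> \<and> mtrace \<rho> = 1"

definition msum :: "nat \<Rightarrow> nat \<Rightarrow> ('i \<Rightarrow> complex mat) \<Rightarrow> 'i set \<Rightarrow> complex mat" where
  "msum d d' f I = mat d d' (\<lambda>(i,j). \<Sum>a\<in>I. f a $$ (i,j))"

definition mlsum :: "nat \<Rightarrow> nat \<Rightarrow> complex mat list \<Rightarrow> complex mat" where
  "mlsum d d' ms = mat d d' (\<lambda>(i,j). \<Sum>m\<leftarrow>ms. m $$ (i,j))"

text \<open>Quantum operation with Kraus operators Ks (each d' x d), output size d'.\<close>
definition qop :: "nat \<Rightarrow> complex mat list \<Rightarrow> complex mat \<Rightarrow> complex mat" where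
  "qop d' Ks A = mlsum d' d' (map (\<lambda>K. K * A * adj K) Ks)"

section \<open>Positive unital circuits (DAGs represented by their tree unfolding)\<close>

text \<open>Leaf v e: variable v with POVM e; Prod l r: Kronecker product;
  Sum d ins: output size d, inputs given as (weight, Kraus operators, child).\<close>
datatype ('v,'a) circ =
    Leaf 'v "'a \<Rightarrow> complex mat"
  | Prod "('v,'a) circ" "('v,'a) circ"
  | Sum nat "(real \<times> complex mat list \<times> ('v,'a) circ) list"

fun eval :: "('v,'a) circ \<Rightarrow> ('v \<Rightarrow> 'a) \<Rightarrow> complex mat" where
  "eval (Leaf v e) x = e (x v)"
| "eval (Prod l r) x = kron (eval l x) (eval r x)"
| "eval (Sum d ins) x =
     mlsum d d (map (\<lambda>(w,Ks,c). complex_of_real w \<cdot>\<^sub>m qop d Ks (eval c x)) ins)"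

fun scope :: "('v,'a) circ \<Rightarrow> 'v set" where
  "scope (Leaf v e) = {v}"
| "scope (Prod l r) = scope l \<union> scope r"
| "scope (Sum d ins) = (\<Union>(w,Ks,c)\<in>set ins. scope c)"

fun punc :: "('v \<Rightarrow> 'a set) \<Rightarrow> ('v,'a) circ \<Rightarrow> nat \<Rightarrow> bool" where
  "punc Om (Leaf v e) d \<longleftrightarrow> finite (Om v) \<and> (\<forall>a\<in>Om v. psd d (e a))
      \<and> msum d d e (Om v) = 1\<^sub>m d"
| "punc Om (Prod l r) d \<longleftrightarrow> (\<exists>d1 d2. d = d1 * d2 \<and> punc Om l d1 \<and> punc Om r d2)"
| "punc Om (Sum d' ins) d \<longleftrightarrow> d' = d \<and> ins \<noteq> [] \<and> (\<Sum>(w,Ks,c)\<leftarrow>ins. w) = 1 \<and>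
      (\<forall>(w,Ks,c)\<in>set ins. w > 0 \<and>
         (\<exists>dj. punc Om c dj \<and> (\<forall>K\<in>set Ks. K \<in> carrier_mat d dj)
             \<and> loewner_le dj (mlsum dj dj (map (\<lambda>K. adj K * K) Ks)) (1\<^sub>m dj)
             \<and> qop d Ks (1\<^sub>m dj) = 1\<^sub>m d))"

fun decomposable :: "('v,'a) circ \<Rightarrow> bool" where
  "decomposable (Leaf v e) \<longleftrightarrow> True"
| "decomposable (Prod l r) \<longleftrightarrow> scope l \<inter> scope r = {} \<and> decomposable l \<and> decomposable r"
| "decomposable (Sum d ins) \<longleftrightarrow> (\<forall>(w,Ks,c)\<in>set ins. decomposable c)"

fun smooth :: "('v,'a) circ \<Rightarrow> bool" where
  "smooth (Leaf v e) \<longleftrightarrow> True"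
| "smooth (Prod l r) \<longleftrightarrow> smooth l \<and> smooth r"
| "smooth (Sum d ins) \<longleftrightarrow> (\<forall>(w,Ks,c)\<in>set ins. smooth c \<and>
      (\<forall>(w',Ks',c')\<in>set ins. scope c = scope c'))"

end

theory Submission
  imports Defs
begin

text \<open>Every unit outputs a positive semidefinite matrix on every assignment: POVM elements are PSD,
  and PSD matrices are closed under Kronecker products, quantum operations and convex combinations.
  Since the trace of a product of two PSD matrices is nonnegative (factor one of them as a sum of
  rank-one matrices \<open>b b\<^sup>*\<close>), every \<open>Tr[o(x)\<rho>]\<close> is nonnegative.

  Normalization: summing the output of a unit over all assignments of its scope gives the identity.
  For a leaf this is the POVM condition; for a decomposable product the sum over assignments of the
  disjoint scopes factorizes into the Kronecker product of two identities; for a smooth sum all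
  inputs share the scope, so linearity and unitality of the quantum operations give
  \<open>\<Sum>\<^sub>j w\<^sub>j \<Phi>\<^sub>j(1) = 1\<close>. Hence \<open>\<Sum>\<^sub>x Tr[o(x)\<rho>] = Tr[\<rho>] = 1\<close>.\<close>

section \<open>Positive semidefinite Hermitian forms\<close>

definition quad_form :: "nat set \<Rightarrow> (nat \<Rightarrow> nat \<Rightarrow> complex) \<Rightarrow> (nat \<Rightarrow> complex) \<Rightarrow> complex" where
  "quad_form S a v = (\<Sum>i\<in>S. \<Sum>j\<in>S. cnj (v i) * a i j * v j)"

lemma quad_form_cong: "(\<And>i. i \<in> S \<Longrightarrow> u i = v i) \<Longrightarrow> quad_form S a u = quad_form S a v"
  unfolding quad_form_def by (intro sum.cong refl) auto

lemma quad_form_insert: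
  assumes "finite S" "k \<notin> S"
  shows "quad_form (insert k S) a v = cnj (v k) * a k k * v k + cnj (v k) * (\<Sum>j\<in>S. a k j * v j)
     + (\<Sum>i\<in>S. cnj (v i) * a i k) * v k + quad_form S a v"
  using assms unfolding quad_form_def
  by (simp add: sum.distrib sum_distrib_left sum_distrib_right algebra_simps)

lemma quad_form_support:
  assumes "finite S" "T \<subseteq> S" "\<And>i. i \<in> S - T \<Longrightarrow> v i = 0"
  shows "quad_form S a v = quad_form T a v"
  unfolding quad_form_def using assms
  by (intro sum.mono_neutral_cong_right) (auto intro!: sum.neutral)

lemma quad_form_unit:
  assumes "finite S" "k \<in> S"
  shows "quad_form S a (\<lambda>i. if i = k then 1 else 0) = a k k"
  using quad_form_support[of S "{k}" "\<lambda>i. if i = k then 1 else 0" a] assms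
  by (simp add: quad_form_def)

lemma quad_form_two_point:
  assumes "finite S" "k \<in> S" "j \<in> S" "k \<noteq> j"
  shows "quad_form S a (\<lambda>i. if i = k then s else if i = j then t else 0)
    = cnj s * a k k * s + cnj s * a k j * t + cnj t * a j k * s + cnj t * a j j * t"
  using quad_form_support[of S "{k, j}" "\<lambda>i. if i = k then s else if i = j then t else 0" a] assms
  by (simp add: quad_form_def)

lemma quad_form_nonneg_diag:
  assumes "finite S" "\<And>v. 0 \<le> quad_form S a v" "k \<in> S"
  shows "0 \<le> a k k"
  using assms(2)[of "\<lambda>i. if i = k then 1 else 0"] quad_form_unit[OF assms(1,3)] by simp

lemma quad_form_nonneg_hermitian:
  assumes "finite S" "\<And>v. 0 \<le> quad_form S a v" "i \<in> S" "j \<in> S"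
  shows "cnj (a i j) = a j i"
proof (cases "i = j")
  case True
  then show ?thesis
    using quad_form_nonneg_diag[OF assms(1,2,3)] by (simp add: less_eq_complex_def complex_eq_iff)
next
  case False
  have real: "Im (cnj s * a i i * s + cnj s * a i j * t + cnj t * a j i * s + cnj t * a j j * t) = 0" for s t
    using assms(2)[of "\<lambda>l. if l = i then s else if l = j then t else 0"]
      quad_form_two_point[OF assms(1,3,4) False] by (simp add: less_eq_complex_def)
  from real[of 1 0] real[of 0 1] real[of 1 1] real[of 1 \<i>] show ?thesis
    by (simp add: complex_eq_iff algebra_simps)
qed

lemma quad_form_nonneg_zero_diag:
  assumes "finite S" "\<And>v. 0 \<le> quad_form S a v" "k \<in> S" "j \<in> S" "a k k = 0"
  shows "a k j = 0"
proof (rule ccontr)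
  assume nz: "a k j \<noteq> 0"
  then have "k \<noteq> j" using assms(5) by auto
  define s where "s = - (a j j + 1) / cnj (a k j)"
  have "cnj s * a k j = - (cnj (a j j) + 1)"
    using nz by (simp add: s_def)
  moreover have "a j k * s = - (a j j + 1)"
    using nz quad_form_nonneg_hermitian[OF assms(1,2,3,4), symmetric] by (simp add: s_def)
  moreover have "cnj (a j j) = a j j"
    using quad_form_nonneg_hermitian[OF assms(1,2,4,4)] .
  ultimately have "quad_form S a (\<lambda>i. if i = k then s else if i = j then 1 else 0) = - a j j - 2"
    using quad_form_two_point[OF assms(1,3,4) \<open>k \<noteq> j\<close>] assms(5) by simp
  then have "0 \<le> (- a j j - 2) + a j j"
    using assms(2) quad_form_nonneg_diag[OF assms(1,2,4)] by (metis add_nonneg_nonneg)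
  then show False
    by (simp add: less_eq_complex_def)
qed

lemma quad_form_minus_rank_one:
  "quad_form S (\<lambda>i j. a i j - c i * cnj (c j)) v
     = quad_form S a v - cnj (\<Sum>j\<in>S. cnj (c j) * v j) * (\<Sum>j\<in>S. cnj (c j) * v j)"
  unfolding quad_form_def
  by (simp add: sum_product sum_subtractf[symmetric] mult.commute mult.left_commute right_diff_distrib)

lemma quad_form_eliminate_pivot:
  fixes v :: "nat \<Rightarrow> complex"
  assumes "finite S" "k \<notin> S" "\<And>i. i \<in> S \<Longrightarrow> cnj (a k i) = a i k" "a k k \<noteq> 0"
  defines "s \<equiv> \<Sum>j\<in>S. a k j * v j"
  shows "quad_form (insert k S) a (v(k := - s / a k k)) = quad_form S a v - cnj s * s / a k k"
proof -
  define u where "u = v(k := - s / a k k)"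
  have "(\<Sum>j\<in>S. a k j * u j) = s" "(\<Sum>i\<in>S. cnj (u i) * a i k) = cnj s"
    "quad_form S a u = quad_form S a v"
    unfolding s_def u_def using assms(2,3) by (auto simp: mult.commute intro!: sum.cong quad_form_cong)
  then have "quad_form (insert k S) a u = cnj (u k) * a k k * u k + cnj (u k) * s + cnj s * u k + quad_form S a v"
    using quad_form_insert[OF assms(1,2), of a u] by simp
  also have "\<dots> = quad_form S a v - cnj s * s / a k k"
    using assms(4) by (simp add: u_def field_simps)
  finally show ?thesis unfolding u_def .
qed

text \<open>If the pivot \<open>a k k\<close> vanishes, so does \<open>c\<close> (division by zero), and so does the pivot row.\<close>

lemma quad_form_nonneg_pivot:
  assumes "finite S" "\<And>v. 0 \<le> quad_form S a v" "k \<in> S" "j \<in> S"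
  defines "c \<equiv> \<lambda>i. a i k / complex_of_real (sqrt (Re (a k k)))"
  shows "a k j = c k * cnj (c j)" "a j k = c j * cnj (c k)"
proof -
  define r where "r = Re (a k k)"
  have akk: "a k k = complex_of_real r" "0 \<le> r"
    using quad_form_nonneg_diag[OF assms(1,2,3)] by (simp_all add: r_def less_eq_complex_def complex_eq_iff)
  have herm: "cnj (a k j) = a j k"
    by (rule quad_form_nonneg_hermitian[OF assms(1,2,3,4)])
  show "a k j = c k * cnj (c j)" "a j k = c j * cnj (c k)"
  proof (atomize (full), cases "r = 0")
    case True
    then have "a k j = 0"
      using quad_form_nonneg_zero_diag[OF assms(1,2,3,4)] akk by simp
    then show "a k j = c k * cnj (c j) \<and> a j k = c j * cnj (c k)"
      using True herm by (simp add: c_def r_def)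
  next
    case False
    have "c k = complex_of_real (r / sqrt r)"
      using akk by (simp add: c_def r_def)
    then have ck: "c k = complex_of_real (sqrt r)"
      using False akk by (simp add: real_div_sqrt)
    have cj: "c j = a j k / complex_of_real (sqrt r)"
      by (simp add: c_def r_def)
    show "a k j = c k * cnj (c j) \<and> a j k = c j * cnj (c k)"
      using False akk(2) by (simp add: ck cj flip: herm)
  qed
qed

lemma quad_form_schur_complement:
  fixes a :: "nat \<Rightarrow> nat \<Rightarrow> complex"
  assumes "finite S" "k \<notin> S" "\<And>v. 0 \<le> quad_form (insert k S) a v"
  defines "c \<equiv> \<lambda>i. a i k / complex_of_real (sqrt (Re (a k k)))"
  shows "0 \<le> quad_form S (\<lambda>i j. a i j - c i * cnj (c j)) v"
proof -
  have fin: "finite (insert k S)" using assms(1) by simp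
  have herm: "cnj (a k i) = a i k" if "i \<in> S" for i
    using quad_form_nonneg_hermitian[OF fin assms(3)] that by simp
  define r where "r = Re (a k k)"
  have "0 \<le> a k k"
    using quad_form_nonneg_diag[OF fin assms(3)] by simp
  then have akk: "a k k = complex_of_real r" "0 \<le> r"
    by (simp_all add: r_def less_eq_complex_def complex_eq_iff)
  show ?thesis
  proof (cases "r = 0")
    case True
    have "quad_form S a (v(k := 0)) = quad_form S a v"
      using assms(2) by (intro quad_form_cong) auto
    then have "quad_form (insert k S) a (v(k := 0)) = quad_form S a v"
      using quad_form_insert[OF assms(1,2), of a "v(k := 0)"] by simp
    then show ?thesis
      using True assms(3)[of "v(k := 0)"] by (simp add: c_def r_def)
  next
    case False
    define s where "s = (\<Sum>j\<in>S. a k j * v j)"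
    have "(\<Sum>j\<in>S. cnj (c j) * v j) = s / complex_of_real (sqrt r)"
      unfolding s_def c_def r_def sum_divide_distrib by (intro sum.cong refl) (simp flip: herm)
    then have "quad_form S (\<lambda>i j. a i j - c i * cnj (c j)) v = quad_form S a v - cnj s * s / a k k"
      using False akk by (simp add: quad_form_minus_rank_one flip: of_real_mult)
    also have "\<dots> = quad_form (insert k S) a (v(k := - s / a k k))"
      using quad_form_eliminate_pivot[of S k a v] assms(1,2) herm False akk by (simp add: s_def)
    finally show ?thesis using assms(3) by simp
  qed
qed

text \<open>Cholesky-type elimination: split off the rank-one part of the first pivot; the Schur
  complement on the remaining indices is again positive semidefinite.\<close>

lemma quad_form_nonneg_gram:
  assumes "finite S" "\<And>v. 0 \<le> quad_form S a v"
  shows "\<exists>b. \<forall>i\<in>S. \<forall>j\<in>S. a i j = (\<Sum>m\<in>S. b m i * cnj (b m j))"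
  using assms
proof (induction S arbitrary: a rule: finite_induct)
  case empty
  then show ?case by simp
next
  case (insert k S)
  define c where "c = (\<lambda>i. a i k / complex_of_real (sqrt (Re (a k k))))"
  have "0 \<le> quad_form S (\<lambda>i j. a i j - c i * cnj (c j)) v" for v
    unfolding c_def by (rule quad_form_schur_complement[OF insert.hyps insert.prems])
  then obtain b' where b': "\<forall>i\<in>S. \<forall>j\<in>S. a i j - c i * cnj (c j) = (\<Sum>m\<in>S. b' m i * cnj (b' m j))"
    using insert.IH by blast
  have pivot: "a k j = c k * cnj (c j)" "a j k = c j * cnj (c k)" if "j \<in> insert k S" for j
    unfolding c_def using quad_form_nonneg_pivot[OF _ insert.prems _ that] insert.hyps by auto
  define b where "b m i = (if m = k then c i else if i \<in> S then b' m i else 0)" for m i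
  have "a i j = (\<Sum>m\<in>insert k S. b m i * cnj (b m j))" if "i \<in> insert k S" "j \<in> insert k S" for i j
  proof -
    have "(\<Sum>m\<in>insert k S. b m i * cnj (b m j)) = c i * cnj (c j) + (\<Sum>m\<in>S. b m i * cnj (b m j))"
      using insert.hyps by (simp add: b_def)
    also have "\<dots> = a i j"
    proof (cases "i \<in> S \<and> j \<in> S")
      case True
      then have "(\<Sum>m\<in>S. b m i * cnj (b m j)) = (\<Sum>m\<in>S. b' m i * cnj (b' m j))"
        using insert.hyps by (intro sum.cong) (auto simp: b_def)
      then show ?thesis
        using b' True by (simp add: algebra_simps)
    next
      case False
      then have "(\<Sum>m\<in>S. b m i * cnj (b m j)) = 0"
        using insert.hyps by (intro sum.neutral) (auto simp: b_def)
      moreover have "i = k \<or> j = k" using that False by auto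
      ultimately show ?thesis
        using pivot that by auto
    qed
    finally show ?thesis ..
  qed
  then show ?case by blast
qed

lemma quad_form_sum_list:
  "quad_form S (\<lambda>i j. \<Sum>m\<leftarrow>ms. g m i j) v = (\<Sum>m\<leftarrow>ms. quad_form S (g m) v)"
  by (induction ms) (simp_all add: quad_form_def sum.distrib algebra_simps)

lemma sum_swap_pairs:
  "(\<Sum>i\<in>A. \<Sum>j\<in>B. \<Sum>k\<in>C. \<Sum>l\<in>D. f i j k l) = (\<Sum>k\<in>C. \<Sum>l\<in>D. \<Sum>i\<in>A. \<Sum>j\<in>B. f i j k l)"
proof -
  have "(\<Sum>i\<in>A. \<Sum>j\<in>B. \<Sum>k\<in>C. \<Sum>l\<in>D. f i j k l) = (\<Sum>i\<in>A. \<Sum>k\<in>C. \<Sum>j\<in>B. \<Sum>l\<in>D. f i j k l)"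
    by (intro sum.cong refl sum.swap)
  also have "\<dots> = (\<Sum>k\<in>C. \<Sum>i\<in>A. \<Sum>l\<in>D. \<Sum>j\<in>B. f i j k l)"
    by (subst sum.swap) (intro sum.cong refl sum.swap)
  also have "\<dots> = (\<Sum>k\<in>C. \<Sum>l\<in>D. \<Sum>i\<in>A. \<Sum>j\<in>B. f i j k l)"
    by (intro sum.cong refl sum.swap)
  finally show ?thesis .
qed

lemma quad_form_congruence:
  "quad_form S (\<lambda>i j. \<Sum>k\<in>T. \<Sum>l\<in>T. g i k * a k l * cnj (g j l)) v
     = quad_form T a (\<lambda>l. \<Sum>j\<in>S. cnj (g j l) * v j)"
proof -
  have "quad_form S (\<lambda>i j. \<Sum>k\<in>T. \<Sum>l\<in>T. g i k * a k l * cnj (g j l)) v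
      = (\<Sum>i\<in>S. \<Sum>j\<in>S. \<Sum>k\<in>T. \<Sum>l\<in>T. cnj (v i) * g i k * a k l * cnj (g j l) * v j)"
    by (simp add: quad_form_def sum_distrib_left sum_distrib_right mult.assoc)
  also have "\<dots> = (\<Sum>k\<in>T. \<Sum>l\<in>T. \<Sum>i\<in>S. \<Sum>j\<in>S. cnj (v i) * g i k * a k l * cnj (g j l) * v j)"
    by (rule sum_swap_pairs)
  also have "\<dots> = quad_form T a (\<lambda>l. \<Sum>j\<in>S. cnj (g j l) * v j)"
    by (simp add: quad_form_def sum_distrib_left sum_distrib_right mult.commute mult.left_commute)
  finally show ?thesis .
qed

lemma index_mult_mat_sum:
  "A \<in> carrier_mat n m \<Longrightarrow> B \<in> carrier_mat m p \<Longrightarrow> i < n \<Longrightarrow> j < p \<Longrightarrow>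
    (A * B) $$ (i,j) = (\<Sum>k<m. A $$ (i,k) * B $$ (k,j))"
  by (auto simp: scalar_prod_def lessThan_atLeast0 intro!: sum.cong)

lemma mtrace_mult:
  assumes "A \<in> carrier_mat n n" "B \<in> carrier_mat n n"
  shows "mtrace (A * B) = (\<Sum>i<n. \<Sum>k<n. A $$ (i,k) * B $$ (k,i))"
  unfolding mtrace_def using assms
  by (intro sum.cong) (simp_all add: index_mult_mat_sum del: index_mult_mat(1))

lemma adj_carrier_mat: "K \<in> carrier_mat d n \<Longrightarrow> adj K \<in> carrier_mat n d"
  by (simp add: adj_def)

lemma index_adj: "i < dim_col A \<Longrightarrow> j < dim_row A \<Longrightarrow> adj A $$ (i,j) = cnj (A $$ (j,i))"
  by (simp add: adj_def)

lemma index_conj_mat: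
  assumes "K \<in> carrier_mat d n" "A \<in> carrier_mat n n" "i < d" "j < d"
  shows "(K * A * adj K) $$ (i,j) = (\<Sum>k<n. \<Sum>l<n. K $$ (i,k) * A $$ (k,l) * cnj (K $$ (j,l)))"
proof -
  have "K * A \<in> carrier_mat d n" using assms(1,2) by simp
  then have "(K * A * adj K) $$ (i,j) = (\<Sum>l<n. \<Sum>k<n. K $$ (i,k) * A $$ (k,l) * cnj (K $$ (j,l)))"
    using assms by (simp add: index_mult_mat_sum[of _ d n _ d] adj_carrier_mat index_mult_mat_sum[of K d n]
        index_adj sum_distrib_right del: index_mult_mat(1))
  also have "\<dots> = (\<Sum>k<n. \<Sum>l<n. K $$ (i,k) * A $$ (k,l) * cnj (K $$ (j,l)))"
    by (rule sum.swap)
  finally show ?thesis .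
qed

lemma index_mlsum: "i < d \<Longrightarrow> j < d' \<Longrightarrow> mlsum d d' Ms $$ (i,j) = (\<Sum>M\<leftarrow>Ms. M $$ (i,j))"
  by (simp add: mlsum_def)

lemma dim_mlsum [simp]: "dim_row (mlsum d d' Ms) = d" "dim_col (mlsum d d' Ms) = d'"
  by (simp_all add: mlsum_def)

lemma mlsum_carrier_mat [simp]: "mlsum d d' Ms \<in> carrier_mat d d'"
  by (simp add: carrier_matI)

lemma index_msum: "i < d \<Longrightarrow> j < d' \<Longrightarrow> msum d d' M I $$ (i,j) = (\<Sum>x\<in>I. M x $$ (i,j))"
  by (simp add: msum_def)

lemma dim_msum [simp]: "dim_row (msum d d' M I) = d" "dim_col (msum d d' M I) = d'"
  by (simp_all add: msum_def)

lemma msum_carrier_mat [simp]: "msum d d' M I \<in> carrier_mat d d'"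
  by (simp add: carrier_matI)

lemma index_qop: "i < d \<Longrightarrow> j < d \<Longrightarrow> qop d Ks A $$ (i,j) = (\<Sum>K\<leftarrow>Ks. (K * A * adj K) $$ (i,j))"
  by (simp add: qop_def index_mlsum comp_def)

lemma qop_carrier_mat [simp]: "qop d Ks A \<in> carrier_mat d d"
  by (simp add: qop_def)

lemma div_mod_less_of_less_mult:
  fixes i d1 d2 :: nat
  assumes "i < d1 * d2"
  shows "i div d2 < d1" "i mod d2 < d2"
proof -
  from assms have "0 < d2" by (cases "d2 = 0") auto
  then show "i div d2 < d1" "i mod d2 < d2"
    using assms by (simp_all add: less_mult_imp_div_less)
qed

lemma index_kron:
  "A \<in> carrier_mat d1 d1' \<Longrightarrow> B \<in> carrier_mat d2 d2' \<Longrightarrow> i < d1 * d2 \<Longrightarrow> j < d1' * d2' \<Longrightarrow>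
    kron A B $$ (i,j) = A $$ (i div d2, j div d2') * B $$ (i mod d2, j mod d2')"
  by (simp add: kron_def)

lemma kron_one: "kron (1\<^sub>m d1) (1\<^sub>m d2) = 1\<^sub>m (d1 * d2)"
proof (rule eq_matI)
  fix i j assume "i < dim_row (1\<^sub>m (d1 * d2))" "j < dim_col (1\<^sub>m (d1 * d2))"
  then have ij: "i < d1 * d2" "j < d1 * d2" by simp_all
  have "i div d2 = j div d2 \<Longrightarrow> i mod d2 = j mod d2 \<Longrightarrow> i = j"
    by (metis div_mult_mod_eq)
  then show "kron (1\<^sub>m d1) (1\<^sub>m d2) $$ (i,j) = 1\<^sub>m (d1 * d2) $$ (i,j)"
    using ij div_mod_less_of_less_mult[OF ij(1)] div_mod_less_of_less_mult[OF ij(2)] by (auto simp: kron_def)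
qed (simp_all add: kron_def)

section \<open>Positive semidefinite matrices\<close>

lemma psd_iff_quad_form:
  "psd n A \<longleftrightarrow> A \<in> carrier_mat n n \<and> (\<forall>v. 0 \<le> quad_form {..<n} (\<lambda>i j. A $$ (i,j)) v)"
proof -
  have form: "(\<Sum>i<n. cnj (v $ i) * (A *\<^sub>v v) $ i) = quad_form {..<n} (\<lambda>i j. A $$ (i,j)) (\<lambda>i. v $ i)"
    if "A \<in> carrier_mat n n" "v \<in> carrier_vec n" for v
    using that by (simp add: quad_form_def scalar_prod_def lessThan_atLeast0 sum_distrib_left mult.assoc)
  show ?thesis
  proof
    assume "psd n A"
    then have A: "A \<in> carrier_mat n n" and nonneg: "\<forall>v\<in>carrier_vec n. 0 \<le> (\<Sum>i<n. cnj (v $ i) * (A *\<^sub>v v) $ i)"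
      unfolding psd_def by auto
    have "quad_form {..<n} (\<lambda>i j. A $$ (i,j)) v = quad_form {..<n} (\<lambda>i j. A $$ (i,j)) (\<lambda>i. vec n v $ i)" for v
      by (intro quad_form_cong) simp
    then show "A \<in> carrier_mat n n \<and> (\<forall>v. 0 \<le> quad_form {..<n} (\<lambda>i j. A $$ (i,j)) v)"
      using A nonneg form[OF A] by (metis vec_carrier)
  next
    assume A: "A \<in> carrier_mat n n \<and> (\<forall>v. 0 \<le> quad_form {..<n} (\<lambda>i j. A $$ (i,j)) v)"
    then have "adj A = A"
      using quad_form_nonneg_hermitian[of "{..<n}" "\<lambda>i j. A $$ (i,j)"] by (auto simp: adj_def intro!: eq_matI)
    then show "psd n A"
      using A form unfolding psd_def by auto
  qed
qed

lemma psd_gram: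
  assumes "psd n A"
  obtains b where "\<And>i j. i < n \<Longrightarrow> j < n \<Longrightarrow> A $$ (i,j) = (\<Sum>m<n. b m i * cnj (b m j))"
  using quad_form_nonneg_gram[of "{..<n}" "\<lambda>i j. A $$ (i,j)"] assms by (auto simp: psd_iff_quad_form)

lemma trace_mult_psd_nonneg:
  assumes "psd n A" "psd n B"
  shows "0 \<le> mtrace (A * B)"
proof -
  obtain b where b: "\<And>i j. i < n \<Longrightarrow> j < n \<Longrightarrow> B $$ (i,j) = (\<Sum>m<n. b m i * cnj (b m j))"
    using psd_gram[OF assms(2)] by blast
  have "A \<in> carrier_mat n n" "B \<in> carrier_mat n n"
    using assms by (simp_all add: psd_def)
  then have "mtrace (A * B) = (\<Sum>i<n. \<Sum>k<n. A $$ (i,k) * B $$ (k,i))"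
    by (rule mtrace_mult)
  also have "\<dots> = (\<Sum>i<n. \<Sum>k<n. \<Sum>m<n. cnj (b m i) * A $$ (i,k) * b m k)"
    by (simp add: b sum_distrib_left algebra_simps)
  also have "\<dots> = (\<Sum>i<n. \<Sum>m<n. \<Sum>k<n. cnj (b m i) * A $$ (i,k) * b m k)"
    by (intro sum.cong refl sum.swap)
  also have "\<dots> = (\<Sum>m<n. \<Sum>i<n. \<Sum>k<n. cnj (b m i) * A $$ (i,k) * b m k)"
    by (rule sum.swap)
  also have "\<dots> = (\<Sum>m<n. quad_form {..<n} (\<lambda>i j. A $$ (i,j)) (b m))"
    by (simp add: quad_form_def)
  also have "0 \<le> \<dots>"
    using assms(1) by (simp add: psd_iff_quad_form sum_nonneg)
  finally show ?thesis .
qed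

lemma psd_mlsum:
  assumes "\<And>M. M \<in> set Ms \<Longrightarrow> psd n M"
  shows "psd n (mlsum n n Ms)"
proof -
  have "quad_form {..<n} (\<lambda>i j. mlsum n n Ms $$ (i,j)) v = (\<Sum>M\<leftarrow>Ms. quad_form {..<n} (\<lambda>i j. M $$ (i,j)) v)" for v
  proof -
    have "quad_form {..<n} (\<lambda>i j. mlsum n n Ms $$ (i,j)) v = quad_form {..<n} (\<lambda>i j. \<Sum>M\<leftarrow>Ms. M $$ (i,j)) v"
      unfolding quad_form_def by (simp add: index_mlsum)
    then show ?thesis by (simp add: quad_form_sum_list)
  qed
  then show ?thesis
    using assms by (auto simp: psd_iff_quad_form intro!: sum_list_nonneg)
qed

lemma psd_smult:
  assumes "psd n A" "0 \<le> c"
  shows "psd n (c \<cdot>\<^sub>m A)"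
proof -
  have "A \<in> carrier_mat n n" using assms(1) by (simp add: psd_def)
  then have "quad_form {..<n} (\<lambda>i j. (c \<cdot>\<^sub>m A) $$ (i,j)) v = c * quad_form {..<n} (\<lambda>i j. A $$ (i,j)) v" for v
    unfolding quad_form_def by (simp add: sum_distrib_left algebra_simps)
  then show ?thesis
    using assms by (simp add: psd_iff_quad_form)
qed

lemma psd_conj:
  assumes "psd n A" "K \<in> carrier_mat d n"
  shows "psd d (K * A * adj K)"
proof -
  have A: "A \<in> carrier_mat n n" using assms(1) by (simp add: psd_def)
  have "quad_form {..<d} (\<lambda>i j. (K * A * adj K) $$ (i,j)) v
      = quad_form {..<n} (\<lambda>i j. A $$ (i,j)) (\<lambda>l. \<Sum>j<d. cnj (K $$ (j,l)) * v j)" for v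
  proof -
    have "quad_form {..<d} (\<lambda>i j. (K * A * adj K) $$ (i,j)) v
        = quad_form {..<d} (\<lambda>i j. \<Sum>k<n. \<Sum>l<n. K $$ (i,k) * A $$ (k,l) * cnj (K $$ (j,l))) v"
      unfolding quad_form_def by (simp add: index_conj_mat[OF assms(2) A])
    then show ?thesis by (simp add: quad_form_congruence)
  qed
  moreover have "K * A * adj K \<in> carrier_mat d d"
    using assms(2) A by (meson adj_carrier_mat mult_carrier_mat)
  ultimately show ?thesis
    using assms(1) by (simp add: psd_iff_quad_form)
qed

lemma psd_qop:
  assumes "psd n A" "\<And>K. K \<in> set Ks \<Longrightarrow> K \<in> carrier_mat d n"
  shows "psd d (qop d Ks A)"
  unfolding qop_def using assms by (auto intro!: psd_mlsum psd_conj)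

text \<open>A Gram factorization \<open>B = (\<Sum>m. b\<^sub>m b\<^sub>m\<^sup>*)\<close> turns the Kronecker product into a quantum operation
  with Kraus operators \<open>1 \<otimes> b\<^sub>m\<close>, where \<open>b\<^sub>m\<close> is read as a column.\<close>

lemma kron_eq_qop:
  assumes "A \<in> carrier_mat d1 d1" "B \<in> carrier_mat d2 d2"
    and "\<And>i j. i < d2 \<Longrightarrow> j < d2 \<Longrightarrow> B $$ (i,j) = (\<Sum>m<d2. b m i * cnj (b m j))"
  shows "kron A B = qop (d1 * d2) (map (\<lambda>m. kron (1\<^sub>m d1) (mat d2 1 (\<lambda>(i,_). b m i))) [0..<d2]) A"
    (is "_ = qop _ (map ?K _) A")
proof (rule eq_matI)
  fix i j assume "i < dim_row (qop (d1 * d2) (map ?K [0..<d2]) A)" "j < dim_col (qop (d1 * d2) (map ?K [0..<d2]) A)"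
  then have ij: "i < d1 * d2" "j < d1 * d2" by (simp_all add: qop_def)
  note lt = div_mod_less_of_less_mult[OF ij(1)] div_mod_less_of_less_mult[OF ij(2)]
  have K: "?K m \<in> carrier_mat (d1 * d2) d1" for m
    by (simp add: kron_def)
  have Kmat: "?K m = mat (d1 * d2) d1 (\<lambda>(i,k). if k = i div d2 then b m (i mod d2) else 0)" for m
    by (intro eq_matI) (auto simp: kron_def dest: div_mod_less_of_less_mult)
  have "(?K m * A * adj (?K m)) $$ (i,j) = b m (i mod d2) * A $$ (i div d2, j div d2) * cnj (b m (j mod d2))" for m
    unfolding index_conj_mat[OF K assms(1) ij] unfolding Kmat using ij lt
    by (simp add: if_distrib[of "\<lambda>x. x * _"] if_distrib[of cnj] if_distrib[of "\<lambda>x. _ * x"] cong: if_cong)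
  then show "kron A B $$ (i,j) = qop (d1 * d2) (map ?K [0..<d2]) A $$ (i,j)"
    using ij lt assms
    by (simp add: index_qop kron_def interv_sum_list_conv_sum_set_nat lessThan_atLeast0 sum_distrib_left algebra_simps)
qed (use assms(1,2) in \<open>simp_all add: kron_def qop_def\<close>)

lemma psd_kron:
  assumes "psd d1 A" "psd d2 B"
  shows "psd (d1 * d2) (kron A B)"
proof -
  obtain b where "\<And>i j. i < d2 \<Longrightarrow> j < d2 \<Longrightarrow> B $$ (i,j) = (\<Sum>m<d2. b m i * cnj (b m j))"
    using psd_gram[OF assms(2)] by blast
  then have "kron A B = qop (d1 * d2) (map (\<lambda>m. kron (1\<^sub>m d1) (mat d2 1 (\<lambda>(i,_). b m i))) [0..<d2]) A"
    using assms by (intro kron_eq_qop) (simp_all add: psd_def)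
  then show ?thesis
    using assms(1) by (auto intro!: psd_qop simp: kron_def)
qed

section \<open>Matrix sums over assignments\<close>

lemma sum_sum_list_swap: "(\<Sum>x\<in>I. \<Sum>t\<leftarrow>ts. f t x) = (\<Sum>t\<leftarrow>ts. \<Sum>x\<in>I. f t x)"
  by (induction ts) (simp_all add: sum.distrib)

lemma msum_cong: "(\<And>x. x \<in> I \<Longrightarrow> M x = M' x) \<Longrightarrow> msum d d' M I = msum d d' M' I"
  by (simp add: msum_def)

lemma msum_reindex:
  assumes "bij_betw h I J"
  shows "msum d d' (\<lambda>x. M (h x)) I = msum d d' M J"
  unfolding msum_def by (simp add: sum.reindex_bij_betw[OF assms, symmetric])

lemma msum_smult:
  assumes "\<And>x. x \<in> I \<Longrightarrow> M x \<in> carrier_mat d d'"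
  shows "msum d d' (\<lambda>x. c \<cdot>\<^sub>m M x) I = c \<cdot>\<^sub>m msum d d' M I"
  using assms[THEN carrier_matD(1)] assms[THEN carrier_matD(2)]
  by (intro eq_matI) (auto simp: index_msum sum_distrib_left intro!: sum.cong)

lemma msum_mlsum:
  "msum d d' (\<lambda>x. mlsum d d' (map (\<lambda>t. F t x) ts)) I = mlsum d d' (map (\<lambda>t. msum d d' (F t) I) ts)"
  by (intro eq_matI) (simp_all add: index_msum index_mlsum comp_def sum_sum_list_swap)

lemma msum_conj:
  assumes "K \<in> carrier_mat d n" "\<And>x. x \<in> I \<Longrightarrow> M x \<in> carrier_mat n n"
  shows "msum d d (\<lambda>x. K * M x * adj K) I = K * msum n n M I * adj K"
proof (rule eq_matI)
  fix i j assume "i < dim_row (K * msum n n M I * adj K)" "j < dim_col (K * msum n n M I * adj K)"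
  then have ij: "i < d" "j < d" using assms(1) by (simp_all add: adj_def)
  have "msum d d (\<lambda>x. K * M x * adj K) I $$ (i,j)
      = (\<Sum>x\<in>I. \<Sum>k<n. \<Sum>l<n. K $$ (i,k) * M x $$ (k,l) * cnj (K $$ (j,l)))"
    using ij assms by (simp add: index_msum index_conj_mat)
  also have "\<dots> = (\<Sum>k<n. \<Sum>l<n. K $$ (i,k) * (\<Sum>x\<in>I. M x $$ (k,l)) * cnj (K $$ (j,l)))"
    by (simp add: sum.swap[of _ I] sum_distrib_left sum_distrib_right)
  also have "\<dots> = (K * msum n n M I * adj K) $$ (i,j)"
    using ij assms(1) by (simp add: index_conj_mat index_msum)
  finally show "msum d d (\<lambda>x. K * M x * adj K) I $$ (i,j) = (K * msum n n M I * adj K) $$ (i,j)" .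
qed (use assms(1) in \<open>simp_all add: adj_def\<close>)

lemma msum_qop:
  assumes "\<And>K. K \<in> set Ks \<Longrightarrow> K \<in> carrier_mat d n" "\<And>x. x \<in> I \<Longrightarrow> M x \<in> carrier_mat n n"
  shows "msum d d (\<lambda>x. qop d Ks (M x)) I = qop d Ks (msum n n M I)"
  unfolding qop_def msum_mlsum using assms
  by (intro arg_cong[where f = "mlsum d d"] map_cong refl msum_conj[where n = n]) auto

lemma msum_kron:
  assumes "\<And>x. x \<in> I \<Longrightarrow> A x \<in> carrier_mat d1 d1" "\<And>y. y \<in> J \<Longrightarrow> B y \<in> carrier_mat d2 d2"
  shows "msum (d1 * d2) (d1 * d2) (\<lambda>(x,y). kron (A x) (B y)) (I \<times> J) = kron (msum d1 d1 A I) (msum d2 d2 B J)"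
proof (rule eq_matI)
  fix i j assume "i < dim_row (kron (msum d1 d1 A I) (msum d2 d2 B J))"
    "j < dim_col (kron (msum d1 d1 A I) (msum d2 d2 B J))"
  then have ij: "i < d1 * d2" "j < d1 * d2" by (simp_all add: kron_def)
  note lt = div_mod_less_of_less_mult[OF ij(1)] div_mod_less_of_less_mult[OF ij(2)]
  have "msum (d1 * d2) (d1 * d2) (\<lambda>(x,y). kron (A x) (B y)) (I \<times> J) $$ (i,j)
      = (\<Sum>(x,y)\<in>I \<times> J. A x $$ (i div d2, j div d2) * B y $$ (i mod d2, j mod d2))"
    using ij assms by (auto simp: index_msum intro!: sum.cong index_kron)
  then show "msum (d1 * d2) (d1 * d2) (\<lambda>(x,y). kron (A x) (B y)) (I \<times> J) $$ (i,j)
      = kron (msum d1 d1 A I) (msum d2 d2 B J) $$ (i,j)"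
    using ij lt by (simp add: kron_def index_msum sum_product sum.cartesian_product)
qed (simp_all add: kron_def)

lemma mlsum_smult_const:
  assumes "M \<in> carrier_mat d d'"
  shows "mlsum d d' (map (\<lambda>t. f t \<cdot>\<^sub>m M) ts) = (\<Sum>t\<leftarrow>ts. f t) \<cdot>\<^sub>m M"
proof -
  have "(\<Sum>t\<leftarrow>ts. f t * z) = (\<Sum>t\<leftarrow>ts. f t) * z" for z
    by (induction ts) (simp_all add: algebra_simps)
  then show ?thesis
    using assms by (intro eq_matI) (simp_all add: index_mlsum comp_def)
qed

lemma mlsum_convex_one:
  assumes "(\<Sum>t\<leftarrow>ts. f t) = 1"
  shows "mlsum d d (map (\<lambda>t. complex_of_real (f t) \<cdot>\<^sub>m 1\<^sub>m d) ts) = 1\<^sub>m d"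
proof -
  have "(\<Sum>t\<leftarrow>ts. complex_of_real (f t)) = 1"
    using assms sum_list_of_real[of "map f ts"] by (simp add: comp_def)
  then show ?thesis
    by (intro eq_matI) (simp_all add: mlsum_smult_const)
qed

lemma bij_betw_PiE_singleton: "bij_betw (\<lambda>x. x v) (PiE {v} Om) (Om v)"
proof (rule bij_betwI[where g = "\<lambda>a. \<lambda>u\<in>{v}. a"])
  show "(\<lambda>x. x v) \<in> PiE {v} Om \<rightarrow> Om v" "(\<lambda>a. \<lambda>u\<in>{v}. a) \<in> Om v \<rightarrow> PiE {v} Om"
    by auto
  show "(\<lambda>u\<in>{v}. x v) = x" if "x \<in> PiE {v} Om" for x
    using that by (auto simp: PiE_iff extensional_def)
qed simp

lemma bij_betw_PiE_Un:
  assumes "A \<inter> B = {}"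
  shows "bij_betw (\<lambda>x. (restrict x A, restrict x B)) (PiE (A \<union> B) Om) (PiE A Om \<times> PiE B Om)"
proof (rule bij_betwI[where g = "\<lambda>(f,g). \<lambda>u\<in>A \<union> B. if u \<in> A then f u else g u"])
  show "(\<lambda>x. (restrict x A, restrict x B)) \<in> PiE (A \<union> B) Om \<rightarrow> PiE A Om \<times> PiE B Om"
    "(\<lambda>(f,g). \<lambda>u\<in>A \<union> B. if u \<in> A then f u else g u) \<in> PiE A Om \<times> PiE B Om \<rightarrow> PiE (A \<union> B) Om"
    by auto
  show "(\<lambda>(f,g). \<lambda>u\<in>A \<union> B. if u \<in> A then f u else g u) (restrict x A, restrict x B) = x"
    if "x \<in> PiE (A \<union> B) Om" for x
    using that by (auto simp: PiE_iff extensional_def)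
  show "(\<lambda>x. (restrict x A, restrict x B)) ((\<lambda>(f,g). \<lambda>u\<in>A \<union> B. if u \<in> A then f u else g u) p) = p"
    if "p \<in> PiE A Om \<times> PiE B Om" for p
    using that assms by (auto simp: PiE_iff extensional_def fun_eq_iff)
qed

lemma sum_mtrace_mult:
  assumes "\<And>x. x \<in> I \<Longrightarrow> M x \<in> carrier_mat d d" "R \<in> carrier_mat d d"
  shows "(\<Sum>x\<in>I. mtrace (M x * R)) = mtrace (msum d d M I * R)"
proof -
  have "(\<Sum>x\<in>I. mtrace (M x * R)) = (\<Sum>x\<in>I. \<Sum>i<d. \<Sum>k<d. M x $$ (i,k) * R $$ (k,i))"
    using assms by (intro sum.cong refl mtrace_mult) auto
  also have "\<dots> = (\<Sum>i<d. \<Sum>x\<in>I. \<Sum>k<d. M x $$ (i,k) * R $$ (k,i))"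
    by (rule sum.swap)
  also have "\<dots> = (\<Sum>i<d. \<Sum>k<d. \<Sum>x\<in>I. M x $$ (i,k) * R $$ (k,i))"
    by (intro sum.cong refl sum.swap)
  also have "\<dots> = mtrace (msum d d M I * R)"
    by (simp add: mtrace_mult[OF msum_carrier_mat assms(2)] index_msum sum_distrib_right)
  finally show ?thesis .
qed

section \<open>Circuits\<close>

lemma circ_induct [case_names Leaf Prod Sum]:
  assumes "\<And>v e. P (Leaf v e)" "\<And>l r. P l \<Longrightarrow> P r \<Longrightarrow> P (circ.Prod l r)"
    "\<And>d ins. (\<And>w Ks c. (w, Ks, c) \<in> set ins \<Longrightarrow> P c) \<Longrightarrow> P (circ.Sum d ins)"
  shows "P C"
proof (induction C rule: circ.induct)
  case (Sum d ins)
  show ?case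
    by (rule assms(3)) (use Sum in \<open>fastforce\<close>)
qed (use assms in auto)

lemma eval_cong: "(\<And>v. v \<in> scope C \<Longrightarrow> x v = y v) \<Longrightarrow> eval C x = eval C y"
proof (induction C rule: circ_induct)
  case (Sum d ins)
  then have "eval c x = eval c y" if "(w, Ks, c) \<in> set ins" for w Ks c
    using that by fastforce
  then show ?case
    by (auto intro!: arg_cong[where f = "mlsum d d"] map_cong)
qed simp_all

lemma punc_Sum_child:
  assumes "punc Om (circ.Sum d' ins) d" "(w, Ks, c) \<in> set ins"
  obtains dc where "d' = d" "0 < w" "punc Om c dc" "\<And>K. K \<in> set Ks \<Longrightarrow> K \<in> carrier_mat d dc"
    "qop d Ks (1\<^sub>m dc) = 1\<^sub>m d"
proof -
  have "d' = d" and children: "\<forall>(w, Ks, c)\<in>set ins. 0 < w \<and> (\<exists>dc. punc Om c dc \<and> (\<forall>K\<in>set Ks. K \<in> carrier_mat d dc)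
      \<and> loewner_le dc (mlsum dc dc (map (\<lambda>K. adj K * K) Ks)) (1\<^sub>m dc) \<and> qop d Ks (1\<^sub>m dc) = 1\<^sub>m d)"
    using assms(1) by simp_all
  with bspec[OF children assms(2)] that show thesis by auto
qed

lemma psd_eval:
  assumes "punc Om C d" "x \<in> Pi (scope C) Om"
  shows "psd d (eval C x)"
  using assms
proof (induction C arbitrary: d rule: circ_induct)
  case (Prod l r)
  then obtain d1 d2 where "d = d1 * d2" "punc Om l d1" "punc Om r d2" by auto
  with Prod show ?case by (simp add: psd_kron)
next
  case (Sum d' ins)
  have "psd d (complex_of_real w \<cdot>\<^sub>m qop d Ks (eval c x))" if child: "(w, Ks, c) \<in> set ins" for w Ks c
  proof -
    obtain dc where "w > 0" "punc Om c dc" "\<And>K. K \<in> set Ks \<Longrightarrow> K \<in> carrier_mat d dc"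
      using punc_Sum_child[OF Sum.prems(1) child] by metis
    moreover have "x \<in> Pi (scope c) Om"
      using Sum.prems(2) child by auto
    ultimately show ?thesis
      using Sum.IH[OF child] by (auto intro!: psd_smult psd_qop simp: less_eq_complex_def)
  qed
  then show ?case
    using Sum.prems(1) by (auto intro!: psd_mlsum)
qed simp

lemma eval_carrier_mat: "punc Om C d \<Longrightarrow> x \<in> Pi (scope C) Om \<Longrightarrow> eval C x \<in> carrier_mat d d"
  using psd_eval psd_def by blast

lemma smooth_scope_child:
  assumes "smooth (circ.Sum d ins)" "(w, Ks, c) \<in> set ins"
  shows "scope c = scope (circ.Sum d ins)"
  using assms by fastforce

lemma msum_eval_Prod:
  assumes "scope l \<inter> scope r = {}" "punc Om l d1" "punc Om r d2"
    and "msum d1 d1 (eval l) (PiE (scope l) Om) = 1\<^sub>m d1" "msum d2 d2 (eval r) (PiE (scope r) Om) = 1\<^sub>m d2"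
  shows "msum (d1 * d2) (d1 * d2) (eval (circ.Prod l r)) (PiE (scope (circ.Prod l r)) Om) = 1\<^sub>m (d1 * d2)"
proof -
  let ?A = "scope l" and ?B = "scope r"
  have "eval l x = eval l (restrict x ?A)" "eval r x = eval r (restrict x ?B)" for x
    by (rule eval_cong, simp)+
  then have "msum (d1 * d2) (d1 * d2) (eval (circ.Prod l r)) (PiE (?A \<union> ?B) Om)
      = msum (d1 * d2) (d1 * d2) (\<lambda>x. (\<lambda>(f,g). kron (eval l f) (eval r g)) (restrict x ?A, restrict x ?B))
          (PiE (?A \<union> ?B) Om)"
    by (intro msum_cong) simp
  also have "\<dots> = msum (d1 * d2) (d1 * d2) (\<lambda>(f,g). kron (eval l f) (eval r g)) (PiE ?A Om \<times> PiE ?B Om)"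
    by (rule msum_reindex[OF bij_betw_PiE_Un[OF assms(1)]])
  also have "\<dots> = kron (msum d1 d1 (eval l) (PiE ?A Om)) (msum d2 d2 (eval r) (PiE ?B Om))"
    using assms(2,3) by (intro msum_kron) (auto intro!: eval_carrier_mat)
  finally show ?thesis
    using assms(4,5) by (simp add: kron_one)
qed

lemma msum_eval_Sum:
  assumes "punc Om (circ.Sum d ins) d"
    and "\<And>w Ks c. (w, Ks, c) \<in> set ins \<Longrightarrow> scope c = scope (circ.Sum d ins)"
    and "\<And>w Ks c d'. (w, Ks, c) \<in> set ins \<Longrightarrow> punc Om c d' \<Longrightarrow> msum d' d' (eval c) (PiE (scope c) Om) = 1\<^sub>m d'"
  shows "msum d d (eval (circ.Sum d ins)) (PiE (scope (circ.Sum d ins)) Om) = 1\<^sub>m d"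
proof -
  let ?X = "PiE (scope (circ.Sum d ins)) Om"
  have input: "msum d d (\<lambda>x. complex_of_real w \<cdot>\<^sub>m qop d Ks (eval c x)) ?X = complex_of_real w \<cdot>\<^sub>m 1\<^sub>m d"
    if child: "(w, Ks, c) \<in> set ins" for w Ks c
  proof -
    obtain d' where d': "punc Om c d'" "\<And>K. K \<in> set Ks \<Longrightarrow> K \<in> carrier_mat d d'" "qop d Ks (1\<^sub>m d') = 1\<^sub>m d"
      using punc_Sum_child[OF assms(1) child] by metis
    have "eval c x \<in> carrier_mat d' d'" if "x \<in> ?X" for x
      using that unfolding assms(2)[OF child, symmetric] by (intro eval_carrier_mat[OF d'(1)]) (simp add: PiE_iff)
    then have "msum d d (\<lambda>x. qop d Ks (eval c x)) ?X = qop d Ks (msum d' d' (eval c) ?X)"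
      using d'(2) by (intro msum_qop)
    also have "\<dots> = 1\<^sub>m d"
      using assms(3)[OF child d'(1)] assms(2)[OF child] d'(3) by simp
    finally show ?thesis
      by (simp add: msum_smult)
  qed
  have "eval (circ.Sum d ins)
      = (\<lambda>x. mlsum d d (map (\<lambda>t. case t of (w, Ks, c) \<Rightarrow> complex_of_real w \<cdot>\<^sub>m qop d Ks (eval c x)) ins))"
    by (simp add: fun_eq_iff)
  then have "msum d d (eval (circ.Sum d ins)) ?X
      = mlsum d d (map (\<lambda>t. msum d d (\<lambda>x. case t of (w, Ks, c) \<Rightarrow> complex_of_real w \<cdot>\<^sub>m qop d Ks (eval c x)) ?X) ins)"
    by (simp only: msum_mlsum)
  also have "\<dots> = mlsum d d (map (\<lambda>t. complex_of_real (fst t) \<cdot>\<^sub>m 1\<^sub>m d) ins)"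
    using input by (intro arg_cong[where f = "mlsum d d"] map_cong) auto
  also have "\<dots> = 1\<^sub>m d"
    using assms(1) by (intro mlsum_convex_one) (simp add: case_prod_unfold)
  finally show ?thesis .
qed

lemma msum_eval_eq_one:
  assumes "punc Om C d" "decomposable C" "smooth C"
  shows "msum d d (eval C) (PiE (scope C) Om) = 1\<^sub>m d"
  using assms
proof (induction C arbitrary: d rule: circ_induct)
  case (Leaf v e)
  then show ?case
    using msum_reindex[OF bij_betw_PiE_singleton, of d d e v Om] by simp
next
  case (Prod l r)
  then obtain d1 d2 where d: "d = d1 * d2" "punc Om l d1" "punc Om r d2" by auto
  show ?case
    unfolding d(1) using Prod d by (intro msum_eval_Prod) auto
next
  case (Sum d' ins)
  then have "d' = d" by simp
  have "msum dc dc (eval c) (PiE (scope c) Om) = 1\<^sub>m dc" if "(w, Ks, c) \<in> set ins" "punc Om c dc" for w Ks c dc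
    using Sum.IH[OF that] Sum.prems(2,3) that(1) by fastforce
  then have "msum d d (eval (circ.Sum d ins)) (PiE (scope (circ.Sum d ins)) Om) = 1\<^sub>m d"
    using Sum.prems smooth_scope_child unfolding \<open>d' = d\<close> by (intro msum_eval_Sum) blast+
  then show ?case
    unfolding \<open>d' = d\<close> .
qed

theorem theorem3:
  fixes Om :: "'v \<Rightarrow> 'a set" and C :: "('v,'a) circ" and X :: "'v set"
    and d :: nat and \<rho> :: "complex mat"
  assumes "punc Om C d" and "decomposable C" and "smooth C"
    and "scope C = X" and "density d \<rho>"
  shows "(\<forall>x \<in> PiE X Om. 0 \<le> mtrace (eval C x * \<rho>))
       \<and> (\<Sum>x \<in> PiE X Om. mtrace (eval C x * \<rho>)) = 1"
proof -
  have \<rho>: "psd d \<rho>" "mtrace \<rho> = 1" "\<rho> \<in> carrier_mat d d"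
    using assms(5) by (simp_all add: density_def psd_def)
  have out: "psd d (eval C x)" if "x \<in> PiE X Om" for x
    using psd_eval[OF assms(1)] that assms(4) by (auto simp: PiE_iff)
  have "(\<Sum>x \<in> PiE X Om. mtrace (eval C x * \<rho>)) = mtrace (msum d d (eval C) (PiE X Om) * \<rho>)"
    using out \<rho>(3) by (intro sum_mtrace_mult) (simp add: psd_def)
  also have "\<dots> = 1"
    using msum_eval_eq_one[OF assms(1-3)] assms(4) \<rho> by simp
  finally show ?thesis
    using out \<rho>(1) trace_mult_psd_nonneg by blast
qed

end
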